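(* There exists a directed set $\mathcal A$, which is not a cardinal number, with $\operatorname{card}(\mathcal A)=\operatorname{cov}(\mathcal N)$, such that $\mathcal{ANM}_{\mathcal A}\setminus\mathcal{ND}_{\mathcal A}$ is $2^{\mathfrak c}$-coneable in $\left(\mathbb R^{[0,1]}\right)^{\mathcal A}$.
   Context: A directed set is a nonempty set $\mathcal A$ with a reflexive transitive relation $\le$ in which any two elements have an upper bound; net convergence: $x_A\to x$ if for each neighbourhood $U$ of $x$ there is $A_0$ with $x_A\in U$ for all $A\ge A_0$. $\left(\mathbb R^{[0,1]}\right)^{\mathcal A}$ is the real vector space (algebra) of nets of functions $[0,1]\to\mathbb R$ with indexwise operations. $\lambda$ is Lebesgue measure, $\mathcal N$ the Lebesgue null subsets of $[0,1]$, $\operatorname{cov}(\mathcal N)$ the least size of a subfamily of $\mathcal N$ covering $[0,1]$. $\mathcal{ANM}_{\mathcal A}$: nets of Lebesgue measurable $f_A:[0,1]\to\mathbb R$ converging a.e. to a measurable $f$ but not converging in measure to $f$ (i.e. there is $\varepsilon>0$ such that $\lambda(\{x:|f_A(x)-f(x)|\ge\varepsilon\})$ does not converge to $0$). $\mathcal{ND}_{\mathcal A}$: nets of Lebesgue measurable $f_A:[0,1]\to\mathbb R$ such that there is an integrable $g$ with $|f_A|\le g$ a.e. for all $A$, $f_A\to f$ a.e. for some integrable $f$, and $\int|f_A-f|\,d\lambda$ does not converge to $0$. A set $S$ is positively (resp. negatively) $\kappa$-coneable if there is a linearly independent $B\subset S$, $\operatorname{card}(B)=\kappa$, such that all finite combinations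 $\sum a_ix_i$, $x_i\in B$, with all $a_i>0$ (resp. all $a_i<0$) lie in $S$; $S$ is $\kappa$-coneable if it is both positively and negatively $\kappa$-coneable. *)

theory Defs
  imports "HOL-Analysis.Analysis"
begin

definition directed_set :: "'i set \<Rightarrow> ('i \<Rightarrow> 'i \<Rightarrow> bool) \<Rightarrow> bool" where
  "directed_set A le \<longleftrightarrow> A \<noteq> {} \<and> (\<forall>a\<in>A. le a a)
     \<and> (\<forall>a\<in>A. \<forall>b\<in>A. \<forall>c\<in>A. le a b \<and> le b c \<longrightarrow> le a c)
     \<and> (\<forall>a\<in>A. \<forall>b\<in>A. \<exists>c\<in>A. le a c \<and> le b c)"

definition is_cardinal_dirset :: "'i set \<Rightarrow> ('i \<Rightarrow> 'i \<Rightarrow> bool) \<Rightarrow> bool" where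
  "is_cardinal_dirset A le \<longleftrightarrow> card_order_on A {(a, b). a \<in> A \<and> b \<in> A \<and> le a b}"

definition net_tendsto :: "'i set \<Rightarrow> ('i \<Rightarrow> 'i \<Rightarrow> bool) \<Rightarrow> ('i \<Rightarrow> real) \<Rightarrow> real \<Rightarrow> bool" where
  "net_tendsto A le x l \<longleftrightarrow>
     (\<forall>e>0. \<exists>a0\<in>A. \<forall>a\<in>A. le a0 a \<longrightarrow> \<bar>x a - l\<bar> < e)"

abbreviation lam01 :: "real measure" where
  "lam01 \<equiv> lebesgue_on {0..1}"

definition null_cover :: "real set set \<Rightarrow> bool" where
  "null_cover F \<longleftrightarrow> (\<forall>N\<in>F. N \<subseteq> {0..1} \<and> N \<in> null_sets lebesgue) \<and> {0..1} \<subseteq> \<Union>F"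

definition card_eq_cov_N :: "'i set \<Rightarrow> bool" where
  "card_eq_cov_N A \<longleftrightarrow> (\<exists>F. null_cover F \<and> (card_of A, card_of F) \<in> ordIso)
     \<and> (\<forall>F. null_cover F \<longrightarrow> (card_of A, card_of F) \<in> ordLeq)"

text \<open>The space (R^[0,1])^A, represented extensionally (value 0 outside A \<times> [0,1]).\<close>
definition nets :: "'i set \<Rightarrow> ('i \<Rightarrow> real \<Rightarrow> real) set" where
  "nets A = {F. \<forall>a t. (a \<notin> A \<or> t \<notin> {0..1}) \<longrightarrow> F a t = 0}"

definition lin_comb :: "('i \<Rightarrow> real \<Rightarrow> real) set \<Rightarrow> (('i \<Rightarrow> real \<Rightarrow> real) \<Rightarrow> real) \<Rightarrow> 'i \<Rightarrow> real \<Rightarrow> real" where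
  "lin_comb T c = (\<lambda>a t. \<Sum>F\<in>T. c F * F a t)"

definition lin_indep :: "('i \<Rightarrow> real \<Rightarrow> real) set \<Rightarrow> bool" where
  "lin_indep B \<longleftrightarrow> (\<forall>T c. finite T \<and> T \<subseteq> B \<and> lin_comb T c = (\<lambda>a t. 0) \<longrightarrow> (\<forall>F\<in>T. c F = 0))"

definition ANM :: "'i set \<Rightarrow> ('i \<Rightarrow> 'i \<Rightarrow> bool) \<Rightarrow> ('i \<Rightarrow> real \<Rightarrow> real) set" where
  "ANM A le = {F \<in> nets A. (\<forall>a\<in>A. F a \<in> borel_measurable lam01) \<and>
     (\<exists>f \<in> borel_measurable lam01.
        (AE x in lam01. net_tendsto A le (\<lambda>a. F a x) (f x)) \<and>
        (\<exists>e>0. \<not> net_tendsto A le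
            (\<lambda>a. measure lam01 {x \<in> {0..1}. \<bar>F a x - f x\<bar> \<ge> e}) 0))}"

definition ND :: "'i set \<Rightarrow> ('i \<Rightarrow> 'i \<Rightarrow> bool) \<Rightarrow> ('i \<Rightarrow> real \<Rightarrow> real) set" where
  "ND A le = {F \<in> nets A. (\<forall>a\<in>A. F a \<in> borel_measurable lam01) \<and>
     (\<exists>g. integrable lam01 g \<and> (\<forall>a\<in>A. AE x in lam01. \<bar>F a x\<bar> \<le> g x)) \<and>
     (\<exists>f. integrable lam01 f \<and>
        (AE x in lam01. net_tendsto A le (\<lambda>a. F a x) (f x)) \<and>
        \<not> net_tendsto A le (\<lambda>a. integral\<^sup>L lam01 (\<lambda>x. \<bar>F a x - f x\<bar>)) 0)}"

text \<open>kappa-coneability of S inside the space V, kappa given as the cardinality of a set K.\<close>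
definition pos_coneable :: "('i \<Rightarrow> real \<Rightarrow> real) set \<Rightarrow> ('i \<Rightarrow> real \<Rightarrow> real) set \<Rightarrow> 'k set \<Rightarrow> bool" where
  "pos_coneable V S K \<longleftrightarrow> (\<exists>B. B \<subseteq> S \<and> S \<subseteq> V \<and> lin_indep B \<and> (card_of B, card_of K) \<in> ordIso \<and>
     (\<forall>T c. finite T \<and> T \<noteq> {} \<and> T \<subseteq> B \<and> (\<forall>F\<in>T. c F > 0) \<longrightarrow> lin_comb T c \<in> S))"

definition neg_coneable :: "('i \<Rightarrow> real \<Rightarrow> real) set \<Rightarrow> ('i \<Rightarrow> real \<Rightarrow> real) set \<Rightarrow> 'k set \<Rightarrow> bool" where
  "neg_coneable V S K \<longleftrightarrow> (\<exists>B. B \<subseteq> S \<and> S \<subseteq> V \<and> lin_indep B \<and> (card_of B, card_of K) \<in> ordIso \<and>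
     (\<forall>T c. finite T \<and> T \<noteq> {} \<and> T \<subseteq> B \<and> (\<forall>F\<in>T. c F < 0) \<longrightarrow> lin_comb T c \<in> S))"

definition coneable :: "('i \<Rightarrow> real \<Rightarrow> real) set \<Rightarrow> ('i \<Rightarrow> real \<Rightarrow> real) set \<Rightarrow> 'k set \<Rightarrow> bool" where
  "coneable V S K \<longleftrightarrow> pos_coneable V S K \<and> neg_coneable V S K"

end

theory Submission
  imports Defs
begin

unbundle cardinal_syntax

text \<open>Let \<open>C\<close> be a covering of [0,1] by \<open>cov(\<N>)\<close> null sets and direct the finite subfamilies
  of \<open>C\<close> by inclusion; this order is not linear, hence not a cardinal, and has size \<open>cov(\<N>)\<close>.
  Fix a null set \<open>Z \<subseteq> [0,1]\<close> of size \<open>\<c>\<close>, whose points are indexed by pairs \<open>(F, G)\<close> of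
  finite sets of reals. The net attached to \<open>S \<subseteq> \<real>\<close> is, at the index \<open>a\<close>, the indicator of
  \<open>{(F, G). S \<inter> F = G}\<close> on \<open>Z\<close> and \<open>1/x\<close> off \<open>Z \<union> \<Union>a\<close>. Off the null set \<open>Z\<close> a combination
  with coefficient sum \<open>k \<noteq> 0\<close> equals \<open>k/x\<close> cut off on \<open>\<Union>a\<close>: it tends to 0 pointwise because
  every point lies in a member of \<open>C\<close>, but at every index it is at least \<open>|k|\<close> almost
  everywhere and not dominated by an integrable function. On \<open>Z\<close> the sets
  \<open>{(F, G). S \<inter> F = G}\<close> form an independent family, which makes the \<open>2^\<c>\<close> nets linearly
  independent.\<close>

section \<open>Finite subsets of an infinite set\<close>

lemma card_of_lists_length_infinite:
  assumes inf: "infinite X"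
  shows "|{xs \<in> lists X. length xs = n}| \<le>o |X|"
proof (induction n)
  case 0
  have "{xs \<in> lists X. length xs = 0} = {[]}" by auto
  moreover have "X \<noteq> {}" using inf by auto
  ultimately show ?case using card_of_singl_ordLeq by metis
next
  case (Suc n)
  have eq: "{xs \<in> lists X. length xs = Suc n} = (\<lambda>(x,xs). x#xs) ` (X \<times> {xs \<in> lists X. length xs = n})"
    by (auto simp: length_Suc_conv image_iff)
  have "|(\<lambda>(x,xs). x#xs) ` (X \<times> {xs \<in> lists X. length xs = n})| \<le>o |X \<times> {xs \<in> lists X. length xs = n}|"
    by (rule card_of_image)
  also have "|X \<times> {xs \<in> lists X. length xs = n}| \<le>o |X \<times> X|"
    using Suc card_of_Times_mono2 by blast
  also have "|X \<times> X| \<le>o |X|"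
    using card_of_Times_same_infinite[OF inf] ordIso_iff_ordLeq by blast
  finally show ?case unfolding eq .
qed

lemma card_of_lists_infinite:
  assumes inf: "infinite X"
  shows "|lists X| \<le>o |X|"
proof -
  have "lists X = (\<Union>n. {xs \<in> lists X. length xs = n})" by auto
  moreover have "|\<Union>n. {xs \<in> lists X. length xs = n}| \<le>o |X|"
    using inf infinite_iff_card_of_nat card_of_lists_length_infinite
    by (intro card_of_UNION_ordLeq_infinite[OF inf]) auto
  ultimately show ?thesis by simp
qed

lemma card_of_Fpow_infinite:
  assumes inf: "infinite X"
  shows "|Fpow X| =o |X|"
proof -
  have "Fpow X \<subseteq> set ` lists X"
  proof
    fix F assume "F \<in> Fpow X"
    then obtain xs where "set xs = F" "F \<subseteq> X" using finite_list by (auto simp: Fpow_def)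
    then show "F \<in> set ` lists X" by auto
  qed
  then have "|Fpow X| \<le>o |set ` lists X|" by (rule card_of_mono1)
  also have "|set ` lists X| \<le>o |lists X|" by (rule card_of_image)
  also have "|lists X| \<le>o |X|" by (rule card_of_lists_infinite[OF inf])
  finally have "|Fpow X| \<le>o |X|" .
  moreover have "|X| \<le>o |Fpow X|"
    unfolding card_of_ordLeq[symmetric]
    by (rule exI[of _ "\<lambda>x. {x}"]) (auto simp: Fpow_def)
  ultimately show ?thesis using ordIso_iff_ordLeq by blast
qed

section \<open>A null set of the size of the continuum\<close>

definition cantor_digit :: "nat set \<Rightarrow> nat \<Rightarrow> real" where
  "cantor_digit S i = (if i \<in> S then (1/3) ^ Suc i else 0)"

definition cantor_point :: "nat set \<Rightarrow> real" where
  "cantor_point S = (\<Sum>i. cantor_digit S i)"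

lemma cantor_digit_bounds: "0 \<le> cantor_digit S i" "cantor_digit S i \<le> (1/3) ^ Suc i"
  by (simp_all add: cantor_digit_def)

lemma sums_geometric_third_tail: "(\<lambda>k. (1/3::real) ^ Suc (k + m)) sums ((1/2) * (1/3) ^ m)"
proof -
  have "(\<lambda>k. (1/3) ^ Suc m * (1/3::real) ^ k) sums ((1/3) ^ Suc m * (1 / (1 - 1/3)))"
    by (intro sums_mult geometric_sums) simp
  then show ?thesis by (simp add: power_add mult.commute)
qed

lemma summable_cantor_digit_tail: "summable (\<lambda>k. cantor_digit S (k + m))"
  by (rule summable_comparison_test[OF _ sums_summable[OF sums_geometric_third_tail[of m]]])
    (use cantor_digit_bounds in \<open>auto simp: add.commute\<close>)

lemma cantor_digit_tail_bounds:
  "0 \<le> (\<Sum>k. cantor_digit S (k + m))" "(\<Sum>k. cantor_digit S (k + m)) \<le> (1/2) * (1/3) ^ m"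
proof -
  show "0 \<le> (\<Sum>k. cantor_digit S (k + m))"
    by (intro suminf_nonneg summable_cantor_digit_tail cantor_digit_bounds)
  show "(\<Sum>k. cantor_digit S (k + m)) \<le> (1/2) * (1/3) ^ m"
    using suminf_le[OF _ summable_cantor_digit_tail sums_summable[OF sums_geometric_third_tail]]
      sums_unique[OF sums_geometric_third_tail] cantor_digit_bounds(2)
    by (metis add.commute add_Suc)
qed

lemma cantor_point_split: "cantor_point S = (\<Sum>i<m. cantor_digit S i) + (\<Sum>k. cantor_digit S (k + m))"
  using suminf_split_initial_segment[OF summable_cantor_digit_tail[of S 0], of m]
  by (simp add: cantor_point_def)

lemma cantor_point_mem: "cantor_point S \<in> {0..1}"
  using cantor_point_split[of S 0] cantor_digit_tail_bounds[of S 0] by simp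

text \<open>A first difference at digit \<open>n\<close> outweighs all later digits, since \<open>3^-(n+1) > 3^-(n+1)/2\<close>.\<close>
lemma cantor_point_less:
  assumes "n \<notin> S" "n \<in> T" "\<And>i. i < n \<Longrightarrow> i \<in> S \<longleftrightarrow> i \<in> T"
  shows "cantor_point S < cantor_point T"
proof -
  have prefix: "(\<Sum>i<n. cantor_digit S i) = (\<Sum>i<n. cantor_digit T i)"
    using assms(3) by (intro sum.cong) (auto simp: cantor_digit_def)
  have "cantor_point S \<le> (\<Sum>i<n. cantor_digit S i) + (1/2) * (1/3) ^ Suc n"
    using cantor_point_split[of S "Suc n"] cantor_digit_tail_bounds(2)[of S "Suc n"] assms(1)
    by (simp add: cantor_digit_def)
  also have "\<dots> < (\<Sum>i<n. cantor_digit T i) + (1/3) ^ Suc n"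
    using prefix by simp
  also have "\<dots> \<le> cantor_point T"
    using cantor_point_split[of T "Suc n"] cantor_digit_tail_bounds(1)[of T "Suc n"] assms(2)
    by (simp add: cantor_digit_def)
  finally show ?thesis .
qed

lemma inj_cantor_point: "inj cantor_point"
proof
  fix S T assume eq: "cantor_point S = cantor_point T"
  show "S = T"
  proof (rule ccontr)
    assume "S \<noteq> T"
    then have ex: "\<exists>n. n \<in> S \<longleftrightarrow> n \<notin> T" by blast
    define n where "n = (LEAST n. n \<in> S \<longleftrightarrow> n \<notin> T)"
    have "n \<in> S \<longleftrightarrow> n \<notin> T" using LeastI_ex[OF ex] by (simp add: n_def)
    moreover have "\<And>i. i < n \<Longrightarrow> i \<in> S \<longleftrightarrow> i \<in> T"
      using not_less_Least unfolding n_def by blast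
    ultimately show False
      using cantor_point_less[of n S T] cantor_point_less[of n T S] eq by (auto simp: eq_commute)
  qed
qed

text \<open>The points whose first \<open>m\<close> digits are prescribed lie in an interval of length
  \<open>3^-m/2\<close>, so the whole range is covered by \<open>2^m\<close> such intervals.\<close>
lemma null_sets_range_cantor_point: "range cantor_point \<in> null_sets lebesgue"
proof -
  have "negligible (range cantor_point)"
    unfolding negligible_outer_le
  proof (intro allI impI)
    fix e :: real assume "e > 0"
    obtain m where m: "(2/3::real) ^ m < e"
      using real_arch_pow_inv[OF \<open>e > 0\<close>, of "2/3"] by auto
    define I where "I T = {\<Sum>i<m. cantor_digit T i .. (\<Sum>i<m. cantor_digit T i) + (1/2) * (1/3) ^ m}"
      for T
    have sub: "range cantor_point \<subseteq> (\<Union>T\<in>Pow {..<m}. I T)"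
    proof
      fix x assume "x \<in> range cantor_point"
      then obtain S where x: "x = cantor_point S" by auto
      have "(\<Sum>i<m. cantor_digit S i) = (\<Sum>i<m. cantor_digit (S \<inter> {..<m}) i)"
        by (rule sum.cong) (auto simp: cantor_digit_def)
      then show "x \<in> (\<Union>T\<in>Pow {..<m}. I T)"
        using cantor_point_split[of S m] cantor_digit_tail_bounds[of S m]
        by (intro UN_I[of "S \<inter> {..<m}"]) (auto simp: x I_def)
    qed
    have "measure lebesgue (\<Union>T\<in>Pow {..<m}. I T) \<le> (\<Sum>T\<in>Pow {..<m}. measure lebesgue (I T))"
      by (rule measure_UNION_le) (auto simp: I_def)
    also have "\<dots> = 2 ^ m * ((1/2) * (1/3) ^ m)"
      by (simp add: I_def card_Pow)
    also have "\<dots> = (1/2) * (2/3) ^ m"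
      by (simp add: power_divide)
    also have "\<dots> \<le> e"
      using m \<open>e > 0\<close> by linarith
    finally show "\<exists>U. range cantor_point \<subseteq> U \<and> U \<in> lmeasurable \<and> measure lebesgue U \<le> e"
      using sub by (intro exI conjI) (auto simp: I_def intro!: fmeasurable.finite_UN)
  qed
  then show ?thesis using negligible_iff_null_sets by blast
qed

lemma exists_null_injection_of_finite_pairs:
  "\<exists>z :: real set \<times> real set \<Rightarrow> real. inj_on z (Fpow UNIV \<times> Fpow UNIV) \<and>
     z ` (Fpow UNIV \<times> Fpow UNIV) \<subseteq> {0..1} \<and> z ` (Fpow UNIV \<times> Fpow UNIV) \<in> null_sets lebesgue"
proof -
  have inf: "infinite (UNIV :: real set)" by (rule infinite_UNIV_char_0)
  have Fpow: "|Fpow (UNIV :: real set)| \<le>o |UNIV :: real set|"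
    using card_of_Fpow_infinite[OF inf] ordIso_iff_ordLeq by blast
  have "|Fpow (UNIV :: real set) \<times> Fpow (UNIV :: real set)| \<le>o |(UNIV :: real set) \<times> (UNIV :: real set)|"
    using card_of_Times_mono1[OF Fpow] card_of_Times_mono2[OF Fpow] ordLeq_transitive by blast
  also have "|(UNIV :: real set) \<times> (UNIV :: real set)| \<le>o |UNIV :: real set|"
    using card_of_Times_same_infinite[OF inf] ordIso_iff_ordLeq by blast
  also have "|UNIV :: real set| \<le>o |UNIV :: nat set set|"
    using eqpoll_sym[OF nat_sets_eqpoll_reals]
    by (simp add: eqpoll_iff_card_of_ordIso ordIso_iff_ordLeq)
  finally obtain code :: "real set \<times> real set \<Rightarrow> nat set"
    where code: "inj_on code (Fpow UNIV \<times> Fpow UNIV)"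
    unfolding card_of_ordLeq[symmetric] by blast
  show ?thesis
  proof (intro exI conjI)
    show "inj_on (cantor_point \<circ> code) (Fpow UNIV \<times> Fpow UNIV)"
      using code inj_cantor_point by (simp add: comp_inj_on inj_on_subset)
    show "(cantor_point \<circ> code) ` (Fpow UNIV \<times> Fpow UNIV) \<subseteq> {0..1}"
      using cantor_point_mem by auto
    show "(cantor_point \<circ> code) ` (Fpow UNIV \<times> Fpow UNIV) \<in> null_sets lebesgue"
      by (rule null_sets_completion_subset[OF _ null_sets_range_cantor_point]) auto
  qed
qed

lemma has_integral_inverse_ln:
  assumes "0 < d" "d \<le> 1"
  shows "(inverse has_integral - ln d) {d..1::real}"
proof -
  have "(inverse has_integral ln 1 - ln d) {d..1::real}"
  proof (rule fundamental_theorem_of_calculus)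
    fix x :: real assume "x \<in> {d..1}"
    then have "x > 0" using assms by auto
    then show "(ln has_vector_derivative inverse x) (at x within {d..1})"
      by (metis DERIV_ln has_field_derivative_at_within has_real_derivative_iff_has_vector_derivative)
  qed fact
  then show ?thesis by simp
qed

lemma nn_integral_inverse_unit_interval: "(\<integral>\<^sup>+x. ennreal (inverse x) \<partial>lam01) = \<infinity>"
proof -
  let ?I = "\<integral>\<^sup>+x. ennreal (inverse x) * indicator {0..1} x \<partial>lborel"
  have eq: "(\<integral>\<^sup>+x. ennreal (inverse x) \<partial>lam01) = ?I"
    by (simp add: nn_integral_restrict_space nn_integral_completion)
  have lower: "ennreal (real n) \<le> ?I" for n
  proof -
    define d where "d = exp (- real n)"
    have d: "0 < d" "d \<le> 1" by (auto simp: d_def)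
    have "ennreal (real n) = ennreal (- ln d)" by (simp add: d_def)
    also have "\<dots> = (\<integral>\<^sup>+x. ennreal (inverse x) * indicator {d..1} x \<partial>lborel)"
      by (rule nn_integral_has_integral_lebesgue'[symmetric]) (use d has_integral_inverse_ln[OF d] in auto)
    also have "\<dots> \<le> ?I"
      by (rule nn_integral_mono) (use d in \<open>auto simp: indicator_def\<close>)
    finally show ?thesis .
  qed
  show ?thesis
  proof (rule ccontr)
    assume "(\<integral>\<^sup>+x. ennreal (inverse x) \<partial>lam01) \<noteq> \<infinity>"
    then obtain r where r: "?I = ennreal r" "0 \<le> r"
      using eq by (metis ennreal_cases infinity_ennreal_def)
    obtain n :: nat where "real n > r" using reals_Archimedean2 by blast
    with lower[of n] r show False by (simp add: ennreal_le_iff)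
  qed
qed

lemma not_integrable_ge_inverse:
  assumes "integrable lam01 g" "c > 0" "AE x in lam01. c * inverse x \<le> g x"
  shows False
proof -
  have "(\<integral>\<^sup>+x. ennreal (inverse x) \<partial>lam01) \<le> (\<integral>\<^sup>+x. ennreal (g x / c) \<partial>lam01)"
    using assms(3)
  proof (intro nn_integral_mono_AE, eventually_elim)
    case (elim x)
    then show ?case using assms(2) by (simp add: field_simps ennreal_leI)
  qed
  moreover have "integrable lam01 (\<lambda>x. g x / c)" using assms(1) by simp
  then have "(\<integral>\<^sup>+x. ennreal (g x / c) \<partial>lam01) \<noteq> \<infinity>" by blast
  ultimately show False using nn_integral_inverse_unit_interval by (simp add: top_unique)
qed

lemma borel_measurable_indicator_null_times:
  fixes u :: "real \<Rightarrow> real"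
  assumes Z: "Z \<in> null_sets lebesgue"
  shows "(\<lambda>t. indicator Z t * u t) \<in> borel_measurable lebesgue"
proof (rule measurableI)
  fix Y :: "real set" assume Y: "Y \<in> sets borel"
  let ?h = "\<lambda>t. indicator Z t * u t"
  have eq: "?h -` Y \<inter> space lebesgue = (if 0 \<in> Y then - Z else {}) \<union> (Z \<inter> ?h -` Y)"
    by (auto simp: indicator_def of_bool_def split: if_splits)
  have "Z \<inter> ?h -` Y \<in> null_sets lebesgue"
    by (rule null_sets_completion_subset[OF _ Z]) auto
  moreover have "- Z \<in> sets lebesgue" using Z by (simp add: Compl_in_sets_lebesgue null_setsD2)
  ultimately show "?h -` Y \<inter> space lebesgue \<in> sets lebesgue"
    unfolding eq by auto
qed auto

lemma AE_lam01_not_in: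
  assumes "N \<in> null_sets lebesgue"
  shows "AE x in lam01. x \<in> {0..1} \<and> x \<notin> N"
proof -
  have "AE x in lebesgue. x \<notin> N" using assms by (rule AE_not_in)
  then show ?thesis by (subst AE_restrict_space_iff) (auto elim: eventually_mono)
qed

section \<open>Nets, null covers and coneability\<close>

lemma not_net_tendsto_if_bounded_away:
  assumes "\<And>a. a \<in> A \<Longrightarrow> le a a" "\<And>a. a \<in> A \<Longrightarrow> e \<le> \<bar>x a - l\<bar>" "e > 0"
  shows "\<not> net_tendsto A le x l"
  using assms unfolding net_tendsto_def by fastforce

lemma null_cover_singletons: "null_cover ((\<lambda>x. {x}) ` {0..1})"
  unfolding null_cover_def by (auto simp: null_sets_completionI)

lemma null_cover_infinite:
  assumes "null_cover F"
  shows "infinite F"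
proof
  assume "finite F"
  with assms have "(\<Union>N\<in>F. N) \<in> null_sets lebesgue"
    by (intro null_sets_UN') (auto simp: countable_finite null_cover_def)
  moreover have "{0..1::real} \<subseteq> (\<Union>N\<in>F. N)" using assms by (auto simp: null_cover_def)
  ultimately have "{0..1::real} \<in> null_sets lebesgue"
    using null_sets_completion_subset by blast
  then have "emeasure lborel {0..1::real} = 0"
    by (simp add: null_sets_completion_iff null_setsD1)
  then show False by simp
qed

lemma exists_minimal_null_cover:
  "\<exists>C. null_cover C \<and> |C| \<le>o |UNIV :: real set| \<and> (\<forall>F. null_cover F \<longrightarrow> |C| \<le>o |F| )"
proof -
  let ?Q = "card_of ` {F. null_cover F}"
  have "|(\<lambda>x. {x}) ` {0..1::real}| \<in> ?Q" using null_cover_singletons by blast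
  then obtain z where z: "z \<in> ?Q" and min: "\<And>y. (y, z) \<in> ordLess \<Longrightarrow> y \<notin> ?Q"
    using wfE_min[OF wf_ordLess] by metis
  then obtain C where C: "null_cover C" "z = |C|" by blast
  have below: "|C| \<le>o |F|" if "null_cover F" for F
    using min[of "|F|"] that C ordLess_or_ordLeq[OF card_of_Well_order card_of_Well_order, of F C]
    by blast
  have "|C| \<le>o |(\<lambda>x. {x}) ` {0..1::real}|" by (rule below[OF null_cover_singletons])
  also have "|(\<lambda>x. {x}) ` {0..1::real}| \<le>o |{0..1::real}|" by (rule card_of_image)
  also have "|{0..1::real}| \<le>o |UNIV :: real set|" by (rule card_of_mono1) simp
  finally show ?thesis using C below by blast
qed

lemma coneable_if_lin_comb_mem:
  fixes B :: "('i \<Rightarrow> real \<Rightarrow> real) set"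
  assumes "S \<subseteq> V" "lin_indep B" "|B| =o |K|"
    and mem: "\<And>T c. finite T \<Longrightarrow> T \<subseteq> B \<Longrightarrow> sum c T \<noteq> 0 \<Longrightarrow> lin_comb T c \<in> S"
  shows "coneable V S K"
proof -
  have "B \<subseteq> S"
    using mem[of "{F}" "\<lambda>_. 1" for F] by (auto simp: lin_comb_def)
  moreover have "sum c T \<noteq> 0" if "finite T" "T \<noteq> {}" "\<forall>F\<in>T. c F > 0"
    for T and c :: "('i \<Rightarrow> real \<Rightarrow> real) \<Rightarrow> real"
    using sum_pos[OF that(1,2), of c] that(3) by simp
  moreover have "sum c T \<noteq> 0" if "finite T" "T \<noteq> {}" "\<forall>F\<in>T. c F < 0"
    for T and c :: "('i \<Rightarrow> real \<Rightarrow> real) \<Rightarrow> real"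
    using sum_pos[OF that(1,2), of "\<lambda>F. - c F"] that(3) by (simp add: sum_negf)
  ultimately show ?thesis
    using assms unfolding coneable_def pos_coneable_def neg_coneable_def by (metis (no_types))
qed

lemma finite_separating_set:
  assumes "finite \<S>" "S\<^sub>1 \<in> \<S>"
  obtains F where "finite F" "\<And>S. S \<in> \<S> \<Longrightarrow> S \<inter> F = S\<^sub>1 \<inter> F \<longleftrightarrow> S = S\<^sub>1"
proof -
  have "\<forall>S\<in>\<S> - {S\<^sub>1}. \<exists>x. x \<in> (S - S\<^sub>1) \<union> (S\<^sub>1 - S)" by blast
  then obtain pick where pick: "\<And>S. S \<in> \<S> - {S\<^sub>1} \<Longrightarrow> pick S \<in> (S - S\<^sub>1) \<union> (S\<^sub>1 - S)"
    by metis
  show ?thesis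
  proof
    show "finite (pick ` (\<S> - {S\<^sub>1}))" using assms by simp
    fix S assume "S \<in> \<S>"
    then show "S \<inter> pick ` (\<S> - {S\<^sub>1}) = S\<^sub>1 \<inter> pick ` (\<S> - {S\<^sub>1}) \<longleftrightarrow> S = S\<^sub>1"
      using pick[of S] by (cases "S = S\<^sub>1") blast+
  qed
qed

locale null_cover_nets =
  fixes C :: "real set set"
    and code :: "real set set \<Rightarrow> 'i"
    and z_of :: "'b set \<times> 'b set \<Rightarrow> real"
  assumes null_cover: "null_cover C"
    and inj_code: "inj_on code (Fpow C)"
    and inj_z_of: "inj_on z_of (Fpow UNIV \<times> Fpow UNIV)"
    and z_of_unit_interval: "z_of ` (Fpow UNIV \<times> Fpow UNIV) \<subseteq> {0..1}"
    and z_of_null: "z_of ` (Fpow UNIV \<times> Fpow UNIV) \<in> null_sets lebesgue"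
begin

definition index_set :: "'i set" where
  "index_set = code ` Fpow C"

definition members :: "'i \<Rightarrow> real set set" where
  "members a = inv_into (Fpow C) code a"

definition below :: "'i \<Rightarrow> 'i \<Rightarrow> bool" where
  "below a b \<longleftrightarrow> members a \<subseteq> members b"

definition Z :: "real set" where
  "Z = z_of ` (Fpow UNIV \<times> Fpow UNIV)"

text \<open>For \<open>S\<close> ranging over all subsets of \<open>'b\<close>, the sets \<open>{z_of (F, G) | F G. S \<inter> F = G}\<close>
  form an independent family of subsets of \<open>Z\<close>.\<close>
definition pattern :: "'b set \<Rightarrow> real \<Rightarrow> real" where
  "pattern S t = (if \<exists>F G. finite F \<and> finite G \<and> t = z_of (F, G) \<and> S \<inter> F = G then 1 else 0)"

definition recip_off :: "'i \<Rightarrow> real \<Rightarrow> real" where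
  "recip_off a t = (if t \<in> \<Union>(members a) then 0 else inverse t)"

definition net :: "'b set \<Rightarrow> 'i \<Rightarrow> real \<Rightarrow> real" where
  "net S a t = (if a \<in> index_set \<and> t \<in> {0..1} then if t \<in> Z then pattern S t else recip_off a t else 0)"

definition net_basis :: "('i \<Rightarrow> real \<Rightarrow> real) set" where
  "net_basis = range net"

lemma members_code: "F \<in> Fpow C \<Longrightarrow> members (code F) = F"
  unfolding members_def using inj_code by (simp add: inv_into_f_f)

lemma members_mem_Fpow: "a \<in> index_set \<Longrightarrow> members a \<in> Fpow C"
  unfolding index_set_def members_def by (auto intro: inv_into_into)

lemma code_mem_index_set: "F \<in> Fpow C \<Longrightarrow> code F \<in> index_set"
  unfolding index_set_def by auto

lemma directed_set_index_set: "directed_set index_set below"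
  unfolding directed_set_def
proof (intro conjI ballI impI)
  show "index_set \<noteq> {}" using code_mem_index_set[OF empty_in_Fpow] by auto
  fix a b assume "a \<in> index_set" "b \<in> index_set"
  then have "members a \<union> members b \<in> Fpow C" using members_mem_Fpow by (auto simp: Fpow_def)
  then show "\<exists>c\<in>index_set. below a c \<and> below b c"
    by (intro bexI[of _ "code (members a \<union> members b)"])
      (auto simp: below_def members_code code_mem_index_set)
qed (auto simp: below_def)

lemma not_is_cardinal_dirset_index_set: "\<not> is_cardinal_dirset index_set below"
proof
  assume "is_cardinal_dirset index_set below"
  then have total: "total_on index_set {(a, b). a \<in> index_set \<and> b \<in> index_set \<and> below a b}"
    unfolding is_cardinal_dirset_def card_order_on_def well_order_on_def linear_order_on_def
    by blast
  have inf: "infinite C" by (rule null_cover_infinite[OF null_cover])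
  obtain N\<^sub>1 where N\<^sub>1: "N\<^sub>1 \<in> C" using infinite_imp_nonempty[OF inf] by blast
  obtain N\<^sub>2 where N\<^sub>2: "N\<^sub>2 \<in> C" "N\<^sub>2 \<noteq> N\<^sub>1"
    using infinite_imp_nonempty[OF infinite_remove[OF inf, of N\<^sub>1]] by blast
  have F: "{N\<^sub>1} \<in> Fpow C" "{N\<^sub>2} \<in> Fpow C" using N\<^sub>1 N\<^sub>2 by (auto simp: Fpow_def)
  then have "code {N\<^sub>1} \<noteq> code {N\<^sub>2}"
    using members_code[OF F(1)] members_code[OF F(2)] N\<^sub>2(2) by (metis singleton_inject)
  moreover have "code {N\<^sub>1} \<in> index_set" "code {N\<^sub>2} \<in> index_set"
    using F by (simp_all add: code_mem_index_set)
  ultimately have "below (code {N\<^sub>1}) (code {N\<^sub>2}) \<or> below (code {N\<^sub>2}) (code {N\<^sub>1})"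
    using total unfolding total_on_def by auto
  then show False using N\<^sub>2(2) by (simp add: below_def members_code F)
qed

lemma card_of_index_set: "|index_set| =o |C|"
proof -
  have "|Fpow C| =o |index_set|"
    unfolding index_set_def card_of_ordIso[symmetric] using inj_code inj_on_imp_bij_betw by blast
  from ordIso_symmetric[OF this] card_of_Fpow_infinite[OF null_cover_infinite[OF null_cover]]
  show ?thesis by (rule ordIso_transitive)
qed

lemma pattern_z_of:
  assumes "finite F" "finite G"
  shows "pattern S (z_of (F, G)) = (if S \<inter> F = G then 1 else 0)"
proof -
  have "z_of (F, G) = z_of (F', G') \<longleftrightarrow> F = F' \<and> G = G'" if "finite F'" "finite G'" for F' G'
    using inj_on_eq_iff[OF inj_z_of, of "(F, G)" "(F', G')"] assms that by (auto simp: Fpow_def)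
  then show ?thesis
    unfolding pattern_def using assms by auto
qed

lemma Z_subset: "Z \<subseteq> {0..1}"
  using z_of_unit_interval by (simp add: Z_def)

lemma null_sets_Z: "Z \<in> null_sets lebesgue"
  using z_of_null by (simp add: Z_def)

lemma net_z_of:
  assumes "finite F" "finite G" "a \<in> index_set"
  shows "net S a (z_of (F, G)) = (if S \<inter> F = G then 1 else 0)"
proof -
  have "z_of (F, G) \<in> Z" using assms by (auto simp: Z_def Fpow_def)
  then show ?thesis using assms Z_subset pattern_z_of by (auto simp: net_def)
qed

lemma inj_net: "inj net"
proof
  fix S S' assume eq: "net S = net S'"
  have a: "code {} \<in> index_set" by (rule code_mem_index_set[OF empty_in_Fpow])
  have "x \<in> S \<longleftrightarrow> x \<in> S'" for x
    using fun_cong[OF fun_cong[OF eq, of "code {}"], of "z_of ({x}, {x})"]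
      net_z_of[of "{x}" "{x}" "code {}" S, OF _ _ a] net_z_of[of "{x}" "{x}" "code {}" S', OF _ _ a]
    by (auto split: if_splits)
  then show "S = S'" by blast
qed

text \<open>Evaluating at the point of \<open>Z\<close> coded by a finite set \<open>F\<close> separating \<open>S\<^sub>1\<close> from the other
  sets involved isolates the coefficient of \<open>net S\<^sub>1\<close>.\<close>
lemma coeff_eq_zero_if_lin_comb_net_basis_eq_zero:
  assumes "finite T" "T \<subseteq> net_basis" "lin_comb T c = (\<lambda>a t. 0)" "F\<^sub>1 \<in> T"
  shows "c F\<^sub>1 = 0"
proof -
  define \<S> where "\<S> = {S. net S \<in> T}"
  have T: "T = net ` \<S>" using assms(2) by (auto simp: \<S>_def net_basis_def)
  have "finite \<S>"
    using assms(1) finite_imageD[of net \<S>] inj_on_subset[OF inj_net subset_UNIV] unfolding T by blast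
  obtain S\<^sub>1 where "S\<^sub>1 \<in> \<S>" and F\<^sub>1: "F\<^sub>1 = net S\<^sub>1" using assms(4) T by auto
  obtain F where "finite F" and sep: "\<And>S. S \<in> \<S> \<Longrightarrow> S \<inter> F = S\<^sub>1 \<inter> F \<longleftrightarrow> S = S\<^sub>1"
    using finite_separating_set[OF \<open>finite \<S>\<close> \<open>S\<^sub>1 \<in> \<S>\<close>] by blast
  define a t where "a = code {}" and "t = z_of (F, S\<^sub>1 \<inter> F)"
  have a: "a \<in> index_set" unfolding a_def by (rule code_mem_index_set[OF empty_in_Fpow])
  have val: "G a t = (if G = F\<^sub>1 then 1 else 0)" if G: "G \<in> T" for G
  proof -
    obtain S where S: "S \<in> \<S>" "G = net S" using G T by auto
    then have "G = F\<^sub>1 \<longleftrightarrow> S = S\<^sub>1" using F\<^sub>1 inj_net by (auto simp: inj_eq)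
    then show ?thesis
      using S sep[OF S(1)] net_z_of[OF \<open>finite F\<close> _ a, of "S\<^sub>1 \<inter> F" S] \<open>finite F\<close>
      by (simp add: t_def)
  qed
  have "c F\<^sub>1 = (\<Sum>G\<in>T. if G = F\<^sub>1 then c G else 0)"
    using assms(1,4) by (simp add: sum.delta')
  also have "\<dots> = lin_comb T c a t"
    unfolding lin_comb_def by (rule sum.cong) (auto simp: val)
  also have "\<dots> = 0" using assms(3) by simp
  finally show ?thesis .
qed

lemma lin_indep_net_basis: "lin_indep net_basis"
  unfolding lin_indep_def using coeff_eq_zero_if_lin_comb_net_basis_eq_zero by blast

lemma lin_comb_off_Z:
  assumes "T \<subseteq> net_basis" "a \<in> index_set" "t \<in> {0..1}" "t \<notin> Z"
  shows "lin_comb T c a t = sum c T * recip_off a t"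
  unfolding lin_comb_def sum_distrib_right
  using assms by (intro sum.cong) (auto simp: net_basis_def net_def)

lemma lin_comb_mem_nets: "T \<subseteq> net_basis \<Longrightarrow> lin_comb T c \<in> nets index_set"
  unfolding nets_def lin_comb_def net_basis_def by (auto intro!: sum.neutral simp: net_def)

lemma null_sets_Union_members:
  assumes "a \<in> index_set"
  shows "\<Union>(members a) \<in> null_sets lebesgue"
proof -
  have "finite (members a)" "members a \<subseteq> C"
    using members_mem_Fpow[OF assms] by (auto simp: Fpow_def)
  then have "(\<Union>N\<in>members a. N) \<in> null_sets lebesgue"
    using null_cover by (intro null_sets_UN') (auto simp: countable_finite null_cover_def)
  then show ?thesis by simp
qed

lemma recip_off_measurable:
  assumes "a \<in> index_set"
  shows "recip_off a \<in> borel_measurable lebesgue"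
proof -
  have "- \<Union>(members a) \<in> sets lebesgue"
    using null_sets_Union_members[OF assms] by (simp add: Compl_in_sets_lebesgue null_setsD2)
  moreover have "(\<lambda>x::real. x) \<in> borel_measurable lebesgue" by (rule measurable_completion) simp
  ultimately have "(\<lambda>t. inverse t * indicator (- \<Union>(members a)) t) \<in> borel_measurable lebesgue"
    by (intro borel_measurable_times borel_measurable_inverse borel_measurable_indicator)
  moreover have "recip_off a = (\<lambda>t. inverse t * indicator (- \<Union>(members a)) t)"
    by (auto simp: recip_off_def indicator_def fun_eq_iff)
  ultimately show ?thesis by simp
qed

text \<open>Off the null set \<open>Z\<close> the combination is a multiple of \<open>recip_off a\<close>; on \<open>Z\<close> it is
  measurable for free by completeness of Lebesgue measure.\<close>
lemma lin_comb_measurable: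
  assumes "T \<subseteq> net_basis" "a \<in> index_set"
  shows "lin_comb T c a \<in> borel_measurable lam01"
proof -
  define k where "k = sum c T"
  have "(\<lambda>t. k * recip_off a t + indicator Z t * (lin_comb T c a t - k * recip_off a t))
      \<in> borel_measurable lebesgue"
    using recip_off_measurable[OF assms(2)]
    by (intro borel_measurable_add[OF _ borel_measurable_indicator_null_times[OF null_sets_Z]]) simp
  then have "(\<lambda>t. k * recip_off a t + indicator Z t * (lin_comb T c a t - k * recip_off a t))
      \<in> borel_measurable lam01"
    by (rule measurable_restrict_space1)
  moreover have "lin_comb T c a t = k * recip_off a t + indicator Z t * (lin_comb T c a t - k * recip_off a t)"
    if "t \<in> space lam01" for t
    using that lin_comb_off_Z[OF assms] by (auto simp: k_def indicator_def)
  ultimately show ?thesis by (subst measurable_cong) auto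
qed

lemma lin_comb_tendsto_zero:
  assumes "T \<subseteq> net_basis" "x \<in> {0..1}" "x \<notin> Z"
  shows "net_tendsto index_set below (\<lambda>a. lin_comb T c a x) 0"
  unfolding net_tendsto_def
proof (intro allI impI)
  fix \<epsilon> :: real assume "\<epsilon> > 0"
  obtain N where N: "N \<in> C" "x \<in> N" using null_cover assms(2) by (auto simp: null_cover_def)
  then have NF: "{N} \<in> Fpow C" by (simp add: Fpow_def)
  show "\<exists>a\<^sub>0\<in>index_set. \<forall>a\<in>index_set. below a\<^sub>0 a \<longrightarrow> \<bar>lin_comb T c a x - 0\<bar> < \<epsilon>"
  proof (intro bexI[OF _ code_mem_index_set[OF NF]] ballI impI)
    fix a assume a: "a \<in> index_set" and "below (code {N}) a"
    then have "recip_off a x = 0" using N members_code[OF NF] by (auto simp: below_def recip_off_def)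
    then show "\<bar>lin_comb T c a x - 0\<bar> < \<epsilon>"
      using lin_comb_off_Z[OF assms(1) a assms(2,3)] \<open>\<epsilon> > 0\<close> by simp
  qed
qed

lemma AE_lin_comb_eq_inverse:
  assumes "T \<subseteq> net_basis" "a \<in> index_set"
  shows "AE x in lam01. 0 < x \<and> x \<le> 1 \<and> lin_comb T c a x = sum c T * inverse x"
proof -
  have "Z \<union> \<Union>(members a) \<union> {0} \<in> null_sets lebesgue"
    using null_sets_Z null_sets_Union_members[OF assms(2)] by (auto simp: null_sets_completionI)
  from AE_lam01_not_in[OF this] show ?thesis
    by eventually_elim (auto simp: lin_comb_off_Z[OF assms] recip_off_def)
qed

lemma measure_lin_comb_ge:
  assumes "T \<subseteq> net_basis" "a \<in> index_set"
  shows "measure lam01 {x \<in> {0..1}. \<bar>sum c T\<bar> \<le> \<bar>lin_comb T c a x\<bar>} = 1"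
proof -
  let ?S = "{x \<in> {0..1}. \<bar>sum c T\<bar> \<le> \<bar>lin_comb T c a x\<bar>}"
  have "{x \<in> space lam01. \<bar>sum c T\<bar> \<le> \<bar>lin_comb T c a x\<bar>} \<in> sets lam01"
    using lin_comb_measurable[OF assms] by measurable
  then have S: "?S \<in> sets lam01" by simp
  have "AE x in lam01. x \<in> ?S \<longleftrightarrow> x \<in> {0..1}"
    using AE_lin_comb_eq_inverse[OF assms, where c = c]
  proof eventually_elim
    case (elim x)
    then have "\<bar>sum c T\<bar> * 1 \<le> \<bar>sum c T\<bar> * inverse x"
      by (intro mult_left_mono) (auto simp: one_le_inverse)
    with elim show ?case by (auto simp: abs_mult)
  qed
  then have "measure lam01 ?S = measure lam01 {0..1}"
    by (rule measure_eq_AE) (use S in auto)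
  also have "\<dots> = 1" by (simp add: measure_restrict_space)
  finally show ?thesis .
qed

lemma lin_comb_mem_ANM:
  assumes "T \<subseteq> net_basis" "sum c T \<noteq> 0"
  shows "lin_comb T c \<in> ANM index_set below"
  unfolding ANM_def
proof (intro CollectI conjI ballI bexI[of _ "\<lambda>x. 0"] lin_comb_mem_nets assms(1)
    lin_comb_measurable borel_measurable_const exI[of _ "\<bar>sum c T\<bar>"])
  show "AE x in lam01. net_tendsto index_set below (\<lambda>a. lin_comb T c a x) 0"
    using AE_lam01_not_in[OF null_sets_Z] by eventually_elim (simp add: lin_comb_tendsto_zero assms)
  show "\<not> net_tendsto index_set below
      (\<lambda>a. measure lam01 {x \<in> {0..1}. \<bar>lin_comb T c a x - 0\<bar> \<ge> \<bar>sum c T\<bar>}) 0"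
    using measure_lin_comb_ge[OF assms(1)] directed_set_index_set
    by (intro not_net_tendsto_if_bounded_away[where e = 1]) (auto simp: directed_set_def)
qed (use assms in auto)

lemma lin_comb_not_mem_ND:
  assumes "T \<subseteq> net_basis" "sum c T \<noteq> 0"
  shows "lin_comb T c \<notin> ND index_set below"
proof
  assume "lin_comb T c \<in> ND index_set below"
  then obtain g where g: "integrable lam01 g"
    and dominated: "\<forall>a\<in>index_set. AE x in lam01. \<bar>lin_comb T c a x\<bar> \<le> g x"
    unfolding ND_def by blast
  have a: "code {} \<in> index_set" by (rule code_mem_index_set[OF empty_in_Fpow])
  have "AE x in lam01. \<bar>sum c T\<bar> * inverse x \<le> g x"
    using AE_lin_comb_eq_inverse[OF assms(1) a, where c = c] dominated[rule_format, OF a]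
    by eventually_elim (simp add: abs_mult)
  moreover have "\<bar>sum c T\<bar> > 0" using assms(2) by simp
  ultimately show False using not_integrable_ge_inverse[OF g] by blast
qed

lemma coneable_ANM_diff_ND:
  "coneable (nets index_set) (ANM index_set below - ND index_set below) (Pow (UNIV :: 'b set))"
proof (rule coneable_if_lin_comb_mem)
  show "ANM index_set below - ND index_set below \<subseteq> nets index_set"
    by (auto simp: ANM_def)
  show "lin_indep net_basis" by (rule lin_indep_net_basis)
  have "|UNIV :: 'b set set| =o |net_basis|"
    unfolding net_basis_def card_of_ordIso[symmetric] using inj_net inj_on_imp_bij_betw by blast
  then show "|net_basis| =o |Pow (UNIV :: 'b set)|" by (simp add: ordIso_symmetric)
qed (use lin_comb_mem_ANM lin_comb_not_mem_ND in blast)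

end

theorem mainTheorem2:
  shows "\<exists>(A :: real set) (le :: real \<Rightarrow> real \<Rightarrow> bool).
           directed_set A le \<and> \<not> is_cardinal_dirset A le \<and> card_eq_cov_N A \<and>
           coneable (nets A) (ANM A le - ND A le) (Pow (UNIV :: real set))"
proof -
  obtain C where C: "null_cover C" and small: "|C| \<le>o |UNIV :: real set|"
    and minimal: "\<And>F. null_cover F \<Longrightarrow> |C| \<le>o |F|"
    using exists_minimal_null_cover by blast
  have "|Fpow C| \<le>o |UNIV :: real set|"
    using card_of_Fpow_infinite[OF null_cover_infinite[OF C]] small by (rule ordIso_ordLeq_trans)
  then obtain code :: "real set set \<Rightarrow> real" where "inj_on code (Fpow C)"
    unfolding card_of_ordLeq[symmetric] by blast
  moreover obtain z_of :: "real set \<times> real set \<Rightarrow> real"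
    where "inj_on z_of (Fpow UNIV \<times> Fpow UNIV)" "z_of ` (Fpow UNIV \<times> Fpow UNIV) \<subseteq> {0..1}"
      "z_of ` (Fpow UNIV \<times> Fpow UNIV) \<in> null_sets lebesgue"
    using exists_null_injection_of_finite_pairs by blast
  ultimately interpret null_cover_nets C code z_of
    using C by unfold_locales
  have "card_eq_cov_N index_set"
    unfolding card_eq_cov_N_def using C card_of_index_set minimal ordIso_ordLeq_trans by blast
  then show ?thesis
    using directed_set_index_set not_is_cardinal_dirset_index_set coneable_ANM_diff_ND by blast
qed

end
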